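(* Let $f$ be analytic on $\mathbb{D}$ with $0<\operatorname{Diam} f(\mathbb{D})<\infty$. Then for all $z,w\in\mathbb{D}$, \[ \frac{|f(z)-f(w)|}{\operatorname{Diam} f(\mathbb{D})}\le \frac{|z-w|}{|1-\bar w z|+\sqrt{(1-|z|^2)(1-|w|^2)}}. \]
   Context: $\mathbb{D}$ is the open unit disk; $\operatorname{Diam}E=\sup_{z,w\in E}|z-w|$. *)

theory Defs
  imports "HOL-Analysis.Analysis"
begin

end

theory Submission
  imports Defs "HOL-Complex_Analysis.Complex_Analysis"
begin

text \<open>Let \<open>\<tau>\<close> be the automorphism of the disc exchanging \<open>z\<close> and \<open>w\<close>, and put
  \<open>g u = (f u - f (\<tau> u)) / Diam f(\<D>)\<close>. Then \<open>g\<close> maps the disc into the closed disc by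
  definition of the diameter, hence into the open disc by the maximum modulus principle, and
  \<open>g z = X = -g w\<close> with \<open>X = (f z - f w) / Diam f(\<D>)\<close>. By the Schwarz--Pick lemma the
  pseudo-hyperbolic distance \<open>2|X| / (1 + |X|\<^sup>2)\<close> of \<open>X\<close> and \<open>-X\<close> is at most
  \<open>\<rho> = |z - w| / |1 - cnj w z|\<close>. Since \<open>x \<mapsto> 2x / (1 + x\<^sup>2)\<close> is increasing on \<open>[0, 1]\<close> and
  takes the value \<open>\<rho>\<close> at the right-hand side of the claim, \<open>|X|\<close> is bounded by it.\<close>

lemma Moebius_function_ball_subset:
  "norm a < 1 \<Longrightarrow> Moebius_function t a ` ball 0 1 \<subseteq> ball 0 1"
  using Moebius_function_norm_lt_1 by auto

lemma holomorphic_self_map_ball_comp: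
  assumes "g holomorphic_on ball 0 1" "g ` ball 0 1 \<subseteq> ball 0 1"
    and "h holomorphic_on ball 0 1" "h ` ball 0 1 \<subseteq> ball 0 1"
  shows "g \<circ> h holomorphic_on ball 0 1" "(g \<circ> h) ` ball 0 1 \<subseteq> ball 0 1"
  using assms by (auto intro: holomorphic_on_compose_gen simp: image_comp[symmetric])

lemma Schwarz_Pick:
  assumes hol: "k holomorphic_on ball 0 1" and into: "k ` ball 0 1 \<subseteq> ball 0 1"
    and z: "norm z < 1" and w: "norm w < 1"
  shows "norm (Moebius_function 0 (k w) (k z)) \<le> norm (Moebius_function 0 w z)"
proof -
  define G where "G = Moebius_function 0 (k w) \<circ> (k \<circ> Moebius_function 0 (-w))"
  have w': "norm (-w) < 1" and kw: "norm (k w) < 1"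
    using w into by (auto simp: image_subset_iff)
  note Moebius = Moebius_function_holomorphic Moebius_function_ball_subset
  have "G holomorphic_on ball 0 1" "G ` ball 0 1 \<subseteq> ball 0 1"
    unfolding G_def
    by (intro holomorphic_self_map_ball_comp Moebius[OF kw] Moebius[OF w'] hol into)+
  moreover have "G 0 = 0"
    by (simp add: G_def Moebius_function_def)
  moreover have "norm (Moebius_function 0 w z) < 1"
    using Moebius_function_norm_lt_1 w z by blast
  ultimately have "norm (G (Moebius_function 0 w z)) \<le> norm (Moebius_function 0 w z)"
    by (intro Schwarz_Lemma(1)) (auto simp: image_subset_iff)
  moreover have "G (Moebius_function 0 w z) = Moebius_function 0 (k w) (k z)"
    using Moebius_function_compose[of "-w" w z] w z by (simp add: G_def)
  ultimately show ?thesis by simp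
qed

text \<open>The involution \<open>\<tau>\<close> is the symmetry \<open>u \<mapsto> -Moebius_function 0 a u\<close> exchanging \<open>0\<close>
  and \<open>a = Moebius_function 0 w z\<close>, conjugated by the automorphism sending \<open>w\<close> to \<open>0\<close>.\<close>

lemma ball_swap_automorphism_exists:
  assumes z: "norm z < 1" and w: "norm w < 1"
  obtains \<tau> where "\<tau> holomorphic_on ball 0 1" "\<tau> ` ball 0 1 \<subseteq> ball 0 1" "\<tau> z = w" "\<tau> w = z"
proof -
  define a where "a = Moebius_function 0 w z"
  have a: "norm a < 1" and w': "norm (-w) < 1"
    using Moebius_function_norm_lt_1 z w by (auto simp: a_def)
  define \<sigma> where "\<sigma> = (\<lambda>u. - Moebius_function 0 a u)"
  define \<tau> where "\<tau> = Moebius_function 0 (-w) \<circ> (\<sigma> \<circ> Moebius_function 0 w)"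
  have \<sigma>: "\<sigma> holomorphic_on ball 0 1" "\<sigma> ` ball 0 1 \<subseteq> ball 0 1"
    unfolding \<sigma>_def using Moebius_function_norm_lt_1[OF a]
    by (auto intro!: holomorphic_intros Moebius_function_holomorphic[OF a])
  note Moebius = Moebius_function_holomorphic Moebius_function_ball_subset
  have "\<tau> holomorphic_on ball 0 1" "\<tau> ` ball 0 1 \<subseteq> ball 0 1"
    unfolding \<tau>_def by (intro holomorphic_self_map_ball_comp Moebius[OF w] Moebius[OF w'] \<sigma>)+
  moreover have "\<tau> z = w"
    by (simp add: \<tau>_def \<sigma>_def a_def[symmetric] Moebius_function_eq_zero Moebius_function_of_zero)
  moreover have "Moebius_function 0 (-w) a = z"
    using Moebius_function_compose[of "-w" w z] z w by (simp add: a_def)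
  then have "\<tau> w = z"
    by (simp add: \<tau>_def \<sigma>_def Moebius_function_eq_zero Moebius_function_of_zero)
  ultimately show thesis
    using that by blast
qed

lemma norm_Moebius_function_neg_self:
  "norm (Moebius_function 0 (-x) x) = 2 * norm x / (1 + (norm x)\<^sup>2)"
proof -
  have "1 - cnj (-x) * x = of_real (1 + (norm x)\<^sup>2)"
    using complex_norm_square[of x] by (simp add: mult.commute)
  then have "Moebius_function 0 (-x) x = 2 * x / of_real (1 + (norm x)\<^sup>2)"
    by (simp add: Moebius_function_simple)
  then show ?thesis
    by (simp only: norm_divide norm_mult norm_of_real) simp
qed

lemma norm_one_minus_cnj_mult_squared:
  "(cmod (1 - cnj w * z))\<^sup>2 = (cmod (z - w))\<^sup>2 + (1 - (cmod z)\<^sup>2) * (1 - (cmod w)\<^sup>2)"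
  unfolding cmod_power2 by (simp add: power2_eq_square algebra_simps)

lemma double_div_one_plus_square_strict_mono:
  fixes x y :: real
  assumes "0 \<le> x" "x < y" "y \<le> 1"
  shows "2 * x / (1 + x\<^sup>2) < 2 * y / (1 + y\<^sup>2)"
proof -
  have "x * y < 1"
    using assms mult_left_mono[of y 1 x] by linarith
  then have "0 < 2 * (y - x) * (1 - x * y)"
    using assms by simp
  also have "\<dots> = 2 * y * (1 + x\<^sup>2) - 2 * x * (1 + y\<^sup>2)"
    by (simp add: algebra_simps power2_eq_square)
  finally have "2 * x * (1 + y\<^sup>2) < 2 * y * (1 + x\<^sup>2)"
    by simp
  moreover have "0 < 1 + x\<^sup>2" "0 < 1 + y\<^sup>2"
    by (simp_all add: add_pos_nonneg)
  ultimately show ?thesis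
    by (simp add: field_simps)
qed

lemma double_div_one_plus_square_div_add:
  fixes A B C :: real
  assumes ABC: "A\<^sup>2 = B\<^sup>2 + C\<^sup>2" and "0 < A" "0 \<le> C"
  shows "2 * (B / (A + C)) / (1 + (B / (A + C))\<^sup>2) = B / A"
proof -
  have AC: "0 < A + C"
    using assms by simp
  have "1 + (B / (A + C))\<^sup>2 = ((A + C)\<^sup>2 + B\<^sup>2) / (A + C)\<^sup>2"
    using AC by (simp add: power_divide add_divide_distrib)
  also have "(A + C)\<^sup>2 + B\<^sup>2 = 2 * A * (A + C)"
    using ABC by (simp add: algebra_simps power2_eq_square)
  finally have "1 + (B / (A + C))\<^sup>2 = 2 * A / (A + C)"
    using AC by (simp add: power2_eq_square)
  then show ?thesis
    using AC \<open>0 < A\<close> by simp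
qed

lemma le_div_add_if_double_div_one_plus_square_le:
  fixes x A B C :: real
  assumes ABC: "A\<^sup>2 = B\<^sup>2 + C\<^sup>2" and "0 < A" "0 \<le> B" "0 \<le> C" "0 \<le> x" "x \<le> 1"
    and le: "2 * x / (1 + x\<^sup>2) \<le> B / A"
  shows "x \<le> B / (A + C)"
proof (rule ccontr)
  assume "\<not> x \<le> B / (A + C)"
  moreover have "B \<le> A + C"
    using ABC assms(2,4) by (smt (verit) power2_le_imp_le zero_le_power2)
  ultimately have "2 * (B / (A + C)) / (1 + (B / (A + C))\<^sup>2) < 2 * x / (1 + x\<^sup>2)"
    using assms by (intro double_div_one_plus_square_strict_mono) auto
  with le show False
    using double_div_one_plus_square_div_add[OF ABC assms(2,4)] by simp
qed

lemma le_Moebius_bound_if_double_div_one_plus_square_le: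
  fixes z w :: complex and x :: real
  assumes z: "norm z < 1" and w: "norm w < 1" and "0 \<le> x" "x \<le> 1"
    and le: "2 * x / (1 + x\<^sup>2) \<le> norm (Moebius_function 0 w z)"
  shows "x \<le> cmod (z - w) / (cmod (1 - cnj w * z) + sqrt ((1 - (cmod z)\<^sup>2) * (1 - (cmod w)\<^sup>2)))"
proof -
  define C where "C = sqrt ((1 - (cmod z)\<^sup>2) * (1 - (cmod w)\<^sup>2))"
  have pos: "0 < (1 - (cmod z)\<^sup>2) * (1 - (cmod w)\<^sup>2)"
    using z w by (simp add: abs_square_less_1)
  then have ABC: "(cmod (1 - cnj w * z))\<^sup>2 = (cmod (z - w))\<^sup>2 + C\<^sup>2"
    using norm_one_minus_cnj_mult_squared by (simp add: C_def)
  have "0 < (cmod (1 - cnj w * z))\<^sup>2"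
    unfolding ABC using pos by (simp add: C_def add_nonneg_pos)
  then have "0 < cmod (1 - cnj w * z)"
    by simp
  moreover have "0 \<le> C"
    using pos by (simp add: C_def)
  moreover have "2 * x / (1 + x\<^sup>2) \<le> cmod (z - w) / cmod (1 - cnj w * z)"
    using le by (simp add: Moebius_function_simple norm_divide)
  ultimately show ?thesis
    unfolding C_def[symmetric] using assms
    by (intro le_div_add_if_double_div_one_plus_square_le[OF ABC]) auto
qed

lemma nonconstant_holomorphic_norm_less:
  assumes "g holomorphic_on S" "open S" "connected S" "\<not> g constant_on S"
    and bound: "\<And>u. u \<in> S \<Longrightarrow> norm (g u) \<le> M" and "u \<in> S"
  shows "norm (g u) < M"
proof (rule ccontr)
  assume "\<not> norm (g u) < M"
  then have "\<And>v. v \<in> S \<Longrightarrow> norm (g v) \<le> norm (g u)"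
    using bound by force
  then have "g constant_on S"
    using assms by (intro maximum_modulus_principle[of g S S u]) auto
  with assms show False by blast
qed

text \<open>A constant of modulus \<open>1\<close> cannot take opposite values at two points.\<close>

lemma holomorphic_into_ball_if_opposite_values:
  assumes hol: "g holomorphic_on ball 0 1" and le_1: "\<And>u. u \<in> ball 0 1 \<Longrightarrow> norm (g u) \<le> 1"
    and "z \<in> ball 0 1" "w \<in> ball 0 1" "g w = - g z"
  shows "g ` ball 0 1 \<subseteq> ball 0 1"
proof (cases "g constant_on ball 0 1")
  case True
  then have "g u = g z" if "u \<in> ball 0 1" for u
    using that assms(3) by (auto simp: constant_on_def)
  with assms(4,5) show ?thesis by force
next
  case False
  then show ?thesis
    using nonconstant_holomorphic_norm_less[OF hol _ _ False le_1] by auto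
qed

theorem mainTheorem10:
  fixes f :: "complex \<Rightarrow> complex" and z w :: complex
  assumes "f holomorphic_on ball 0 1"
    and "bounded (f ` ball 0 1)"
    and "diameter (f ` ball 0 1) > 0"
    and "z \<in> ball 0 1" and "w \<in> ball 0 1"
  shows "cmod (f z - f w) / diameter (f ` ball 0 1)
         \<le> cmod (z - w) / (cmod (1 - cnj w * z) + sqrt ((1 - (cmod z)\<^sup>2) * (1 - (cmod w)\<^sup>2)))"
proof -
  have z: "norm z < 1" and w: "norm w < 1"
    using assms(4,5) by auto
  obtain \<tau> where hol\<tau>: "\<tau> holomorphic_on ball 0 1" and \<tau>_into: "\<tau> ` ball 0 1 \<subseteq> ball 0 1"
    and \<tau>z: "\<tau> z = w" and \<tau>w: "\<tau> w = z"
    using ball_swap_automorphism_exists[OF z w] .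
  define g where "g u = (f u - f (\<tau> u)) / diameter (f ` ball 0 1)" for u
  have hol: "g holomorphic_on ball 0 1"
    unfolding g_def using assms(3) \<tau>_into
    by (intro holomorphic_intros assms(1) holomorphic_on_compose_gen[OF hol\<tau> assms(1), unfolded o_def])
      auto
  have g_le_1: "norm (g u) \<le> 1" if "u \<in> ball 0 1" for u
  proof -
    have "\<tau> u \<in> ball 0 1"
      using that \<tau>_into by blast
    then show ?thesis
      using diameter_bounded_bound[OF assms(2), of "f u" "f (\<tau> u)"] that assms(3)
      by (simp add: g_def norm_divide dist_norm)
  qed
  moreover have gw: "g w = - g z"
    by (simp add: g_def \<tau>z \<tau>w minus_divide_left)
  ultimately have "g ` ball 0 1 \<subseteq> ball 0 1"
    using holomorphic_into_ball_if_opposite_values[OF hol _ assms(4,5)] by blast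
  then have "norm (Moebius_function 0 (- g z) (g z)) \<le> norm (Moebius_function 0 w z)"
    using Schwarz_Pick[OF hol _ z w] gw by simp
  then have "norm (g z) \<le> cmod (z - w) / (cmod (1 - cnj w * z) + sqrt ((1 - (cmod z)\<^sup>2) * (1 - (cmod w)\<^sup>2)))"
    using g_le_1 assms(4)
    by (intro le_Moebius_bound_if_double_div_one_plus_square_le[OF z w])
      (simp_all add: norm_Moebius_function_neg_self)
  then show ?thesis
    using assms(3) by (simp add: g_def \<tau>z norm_divide)
qed

end
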